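(* Let $M\in\mathbb{R}^{D\times D}$ be symmetric positive semidefinite, let $L_*$ be a $d$-dimensional subspace of $\mathbb{R}^D$ with $1\le d<D$, and let $x=\sigma_{D-d}(U_{L_*^\perp}^\top MU_{L_*^\perp})$, $y=\sigma_d(U_{L_*}^\top MU_{L_*})$, $z=\|U_{L_*}^\top MU_{L_*^\perp}\|$. Then $$\sigma_D(M)\ge\frac{(x+y)-\sqrt{(x-y)^2+4z^2}}{2}.$$ If moreover $z\le\sqrt{xy}/2$, then $\sigma_D(M)\ge\min(x,y)/3$.
   Context: $U_{L_*}\in\mathbb{R}^{D\times d}$ and $U_{L_*^\perp}\in\mathbb{R}^{D\times(D-d)}$ have orthonormal columns spanning $L_*$ and its orthogonal complement. $\sigma_i(\cdot)$ denotes the $i$-th largest eigenvalue of a symmetric matrix, and $\|\cdot\|$ is the spectral norm. *)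

theory Defs
  imports "Jordan_Normal_Form.Char_Poly" "HOL-Computational_Algebra.Polynomial"
begin

text \<open>Eigenvalues (with algebraic multiplicity) of a square real matrix, sorted in
  decreasing order; for a real symmetric matrix these are all its eigenvalues.
  sigma A i is the i-th largest eigenvalue (1-based).\<close>
definition eigs_desc :: "real mat \<Rightarrow> real list" where
  "eigs_desc A = rev (sorted_list_of_multiset (proots (char_poly A)))"

definition sigma :: "real mat \<Rightarrow> nat \<Rightarrow> real" where
  "sigma A i = eigs_desc A ! (i - 1)"

definition vnorm :: "real vec \<Rightarrow> real" where
  "vnorm v = sqrt (v \<bullet> v)"

definition spec_norm :: "real mat \<Rightarrow> real" where
  "spec_norm A = Sup {vnorm (A *\<^sub>v v) | v. v \<in> carrier_vec (dim_col A) \<and> vnorm v = 1}"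

definition psd :: "real mat \<Rightarrow> nat \<Rightarrow> bool" where
  "psd M n \<longleftrightarrow> M \<in> carrier_mat n n \<and> M\<^sup>T = M \<and>
     (\<forall>v \<in> carrier_vec n. v \<bullet> (M *\<^sub>v v) \<ge> 0)"

end

(*
  Let q be a unit eigenvector of M for its smallest eigenvalue. Since U U^T + V V^T = 1, we can
  write q = U a + V b with |a|^2 + |b|^2 = 1. With A = U^T M U, B = U^T M V, C = V^T M V and
  s = |a|, t = |b|, the Rayleigh bounds for A and C and Cauchy-Schwarz for B give
    sigma_D(M) = q^T M q = a^T A a + 2 a^T B b + b^T C b >= y s^2 + x t^2 - 2 z s t.
  The right-hand side is the quadratic form of the 2 x 2 matrix [[y, -z], [-z, x]] at the unit
  vector (s, t), so it is at least the smaller eigenvalue ((x + y) - sqrt ((x - y)^2 + 4 z^2)) / 2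
  of that matrix; if 4 z^2 <= x y, an elementary estimate bounds this below by min(x, y) / 3.
  The Rayleigh bounds come from the spectral theorem for real symmetric matrices, obtained by
  deflation along a real eigenvector.
*)

theory Submission
  imports Defs "Jordan_Normal_Form.Schur_Decomposition"
    "HOL-Computational_Algebra.Fundamental_Theorem_Algebra" "HOL-Analysis.L2_Norm"
begin

lemma conjugate_real_vec [simp]: "conjugate (v :: real vec) = v"
  by (auto simp: conjugate_vec_def)

lemma scalar_prod_self_nonneg: "0 \<le> (v :: real vec) \<bullet> v"
  unfolding scalar_prod_def by (auto intro: sum_nonneg)

lemma scalar_prod_self_pos:
  assumes "(v :: real vec) \<in> carrier_vec n" and "v \<noteq> 0\<^sub>v n"
  shows "0 < v \<bullet> v"
  using conjugate_square_eq_0_vec[OF assms(1)] assms(2) scalar_prod_self_nonneg[of v]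
  by simp

lemma scalar_prod_self_eq_sum_squares:
  "(v :: real vec) \<in> carrier_vec n \<Longrightarrow> v \<bullet> v = (\<Sum>i<n. (v $ i)\<^sup>2)"
  by (auto simp: scalar_prod_def power2_eq_square lessThan_atLeast0)

lemma vnorm_nonneg: "0 \<le> vnorm v"
  unfolding vnorm_def using scalar_prod_self_nonneg[of v] by simp

lemma vnorm_square: "(vnorm v)\<^sup>2 = v \<bullet> v"
  unfolding vnorm_def using scalar_prod_self_nonneg[of v] by simp

lemma vnorm_smult: "vnorm (k \<cdot>\<^sub>v v) = \<bar>k\<bar> * vnorm v"
proof -
  have "(k \<cdot>\<^sub>v v) \<bullet> (k \<cdot>\<^sub>v v) = k\<^sup>2 * (v \<bullet> v)"
    using carrier_vecI[of v "dim_vec v"] by (simp add: power2_eq_square)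
  then show ?thesis unfolding vnorm_def by (simp add: real_sqrt_mult)
qed

lemma vnorm_eq_L2_set: "v \<in> carrier_vec n \<Longrightarrow> vnorm v = L2_set (($) v) {..<n}"
  unfolding vnorm_def L2_set_def by (simp add: scalar_prod_self_eq_sum_squares)

lemma abs_scalar_prod_le_vnorm:
  assumes "a \<in> carrier_vec n" and "c \<in> carrier_vec n"
  shows "\<bar>a \<bullet> c\<bar> \<le> vnorm a * vnorm c"
proof -
  have "\<bar>a \<bullet> c\<bar> = \<bar>\<Sum>i<n. a $ i * c $ i\<bar>"
    using assms by (simp add: scalar_prod_def lessThan_atLeast0)
  also have "\<dots> \<le> (\<Sum>i<n. \<bar>a $ i\<bar> * \<bar>c $ i\<bar>)"
    by (rule order_trans[OF sum_abs]) (simp add: abs_mult)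
  also have "\<dots> \<le> vnorm a * vnorm c"
    using assms by (simp add: vnorm_eq_L2_set L2_set_mult_ineq)
  finally show ?thesis .
qed

section \<open>Spectral theorem for real symmetric matrices\<close>

lemma real_sym_mat_complex_eigenvalue_real:
  fixes A :: "real mat"
  assumes A: "A \<in> carrier_mat n n" and sym: "A\<^sup>T = A"
    and ev: "eigenvalue (of_real_hom.mat_hom A :: complex mat) z"
  shows "z \<in> \<real>"
proof -
  \<comment> \<open>\<open>S = v\<^sup>* A v\<close> equals \<open>z |v|\<^sup>2\<close> and is real because \<open>A\<close> is real symmetric\<close>
  let ?Ac = "of_real_hom.mat_hom A :: complex mat"
  have Ac: "?Ac \<in> carrier_mat n n" using A by auto
  obtain v where v: "v \<in> carrier_vec n" and v0: "v \<noteq> 0\<^sub>v n" and Av: "?Ac *\<^sub>v v = z \<cdot>\<^sub>v v"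
    using ev Ac unfolding eigenvalue_def eigenvector_def by auto
  define N where "N = (\<Sum>i<n. cnj (v $ i) * v $ i)"
  define f where "f i j = of_real (A $$ (i, j)) * cnj (v $ i) * v $ j" for i j
  define S where "S = (\<Sum>i<n. \<Sum>j<n. f i j)"
  have "N = v \<bullet>c v"
    using v by (simp add: N_def scalar_prod_def lessThan_atLeast0 mult.commute)
  then have N0: "N \<noteq> 0" using v v0 by simp
  have "S = (\<Sum>i<n. cnj (v $ i) * (?Ac *\<^sub>v v) $ i)"
    using A v by (auto simp: S_def f_def sum_distrib_left scalar_prod_def lessThan_atLeast0
        mult.assoc intro!: sum.cong)
  also have "\<dots> = z * N"
    unfolding N_def Av using v by (auto simp: sum_distrib_left intro!: sum.cong)
  finally have Sz: "S = z * N" .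
  have "A $$ (i, j) = A $$ (j, i)" if "i < n" "j < n" for i j
    using sym that A by (metis carrier_matD index_transpose_mat(1))
  then have "cnj S = (\<Sum>i<n. \<Sum>j<n. f j i)"
    unfolding S_def f_def cnj_sum by (auto intro!: sum.cong simp: mult.commute mult.left_commute)
  also have "\<dots> = S" unfolding S_def by (rule sum.swap)
  finally have "cnj S = S" .
  moreover have "cnj N = N" unfolding N_def cnj_sum by (simp add: mult.commute)
  ultimately have "cnj z * N = z * N" using Sz by (metis complex_cnj_mult)
  then show ?thesis using N0 by (simp add: Reals_cnj_iff)
qed

lemma real_sym_mat_has_eigenvalue:
  fixes A :: "real mat"
  assumes A: "A \<in> carrier_mat n n" and sym: "A\<^sup>T = A" and n0: "0 < n"
  obtains r where "eigenvalue A r"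
proof -
  let ?Ac = "of_real_hom.mat_hom A :: complex mat"
  have Ac: "?Ac \<in> carrier_mat n n" using A by auto
  have "degree (char_poly ?Ac) = n" using degree_monic_char_poly[OF Ac] by simp
  then have "\<not> constant (poly (char_poly ?Ac))" using n0 by (simp add: constant_degree)
  then obtain z where z: "poly (char_poly ?Ac) z = 0"
    using fundamental_theorem_of_algebra by blast
  then have "z \<in> \<real>"
    using real_sym_mat_complex_eigenvalue_real[OF A sym] eigenvalue_root_char_poly[OF Ac] by simp
  then obtain r where zr: "z = of_real r" by (auto elim: Reals_cases)
  have "of_real (poly (char_poly A) r) = (0 :: complex)"
    using z unfolding of_real_hom.char_poly_hom[OF A] zr of_real_hom.poly_map_poly .
  then have "eigenvalue A r" using eigenvalue_root_char_poly[OF A] by simp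
  then show thesis by (rule that)
qed

lemma unit_eigenvector_exists:
  fixes A :: "real mat"
  assumes A: "A \<in> carrier_mat n n" and ev: "eigenvalue A r"
  obtains u where "u \<in> carrier_vec n" "u \<bullet> u = 1" "A *\<^sub>v u = r \<cdot>\<^sub>v u"
proof -
  obtain w where w: "w \<in> carrier_vec n" "w \<noteq> 0\<^sub>v n" and Aw: "A *\<^sub>v w = r \<cdot>\<^sub>v w"
    using ev A unfolding eigenvalue_def eigenvector_def by auto
  have pos: "0 < w \<bullet> w" by (rule scalar_prod_self_pos[OF w])
  define u where "u = (1 / sqrt (w \<bullet> w)) \<cdot>\<^sub>v w"
  show thesis
  proof
    show "u \<in> carrier_vec n" unfolding u_def using w by simp
    show "u \<bullet> u = 1" unfolding u_def using w pos by simp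
    show "A *\<^sub>v u = r \<cdot>\<^sub>v u" unfolding u_def using w A Aw
      by (simp add: mult_mat_vec smult_smult_assoc mult.commute)
  qed
qed

lemma orthonormal_basis_completion:
  fixes u :: "real vec"
  assumes u: "u \<in> carrier_vec n" and u1: "u \<bullet> u = 1"
  obtains W where "W \<in> carrier_mat n n" "W\<^sup>T * W = 1\<^sub>m n" "col W 0 = u"
proof -
  interpret cof_vec_space n "TYPE(real)" .
  have u0: "u \<noteq> 0\<^sub>v n" using u1 u by auto
  have n0: "0 < n" using u0 u by (cases n) auto
  define b where "b = basis_completion u"
  note bc = basis_completion[OF u u0, folded b_def]
  obtain vs where bv: "b = u # vs" using bc(6,7) u0 u by (cases b) auto
  define ws where "ws = gram_schmidt n b"
  note gs = gram_schmidt_result[OF bc(2) bc(4) bc(5) ws_def]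
  have lws: "length ws = n" using gs bc by simp
  have ws0: "ws ! 0 = u"
    using gram_schmidt_hd[OF u, of vs] lws n0 unfolding ws_def bv
    by (cases "gram_schmidt n (u # vs)") auto
  have wsc: "ws ! i \<in> carrier_vec n" if "i < n" for i using gs lws that by auto
  have orth: "(ws ! i \<bullet> ws ! j = 0) = (i \<noteq> j)" if "i < n" "j < n" for i j
    using gs(2) lws that unfolding corthogonal_def by auto
  define W where "W = mat_of_cols n (map (\<lambda>w. (1 / sqrt (w \<bullet> w)) \<cdot>\<^sub>v w) ws)"
  have W: "W \<in> carrier_mat n n" unfolding W_def mat_of_cols_def using lws by auto
  have colW: "col W i = (1 / sqrt (ws ! i \<bullet> ws ! i)) \<cdot>\<^sub>v ws ! i" if "i < n" for i
    unfolding W_def using lws wsc that by (simp add: col_mat_of_cols)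
  have "col W i \<bullet> col W j = (if i = j then 1 else 0)" if i: "i < n" and j: "j < n" for i j
  proof -
    have pos: "0 < ws ! i \<bullet> ws ! i"
      using orth[OF i i] scalar_prod_self_nonneg[of "ws ! i"] by linarith
    have "col W i \<bullet> col W j
        = (1 / sqrt (ws ! i \<bullet> ws ! i)) * (1 / sqrt (ws ! j \<bullet> ws ! j)) * (ws ! i \<bullet> ws ! j)"
      using colW[OF i] colW[OF j] wsc[OF i] wsc[OF j] by simp
    then show ?thesis using orth[OF i j] pos by (cases "i = j") (auto simp: field_simps)
  qed
  then have "W\<^sup>T * W = 1\<^sub>m n" using W by (intro eq_matI) (auto simp: row_transpose)
  moreover have "col W 0 = u" using colW[OF n0] ws0 u1 u by simp
  ultimately show thesis using W that by blast
qed

lemma sym_congruence: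
  fixes X M :: "'a :: comm_ring_1 mat"
  assumes X: "X \<in> carrier_mat n k" and M: "M \<in> carrier_mat n n" and sym: "M\<^sup>T = M"
  shows "(X\<^sup>T * M * X)\<^sup>T = X\<^sup>T * M * X"
proof -
  have "(X\<^sup>T * M * X)\<^sup>T = X\<^sup>T * (X\<^sup>T * M)\<^sup>T"
    using X M by (subst transpose_mult[of _ k n _ k]) auto
  also have "(X\<^sup>T * M)\<^sup>T = M * X"
    using X M sym by (subst transpose_mult[of _ k n _ n]) auto
  finally show ?thesis using X M by (simp add: assoc_mult_mat[of _ k n _ n _ k])
qed

lemma col_congruence_eigenvector:
  fixes A W :: "'a :: field mat"
  assumes A: "A \<in> carrier_mat n n" and W: "W \<in> carrier_mat n n"
    and WtW: "W\<^sup>T * W = 1\<^sub>m n" and n0: "0 < n" and ev: "A *\<^sub>v col W 0 = e \<cdot>\<^sub>v col W 0"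
  shows "col (W\<^sup>T * A * W) 0 = e \<cdot>\<^sub>v unit_vec n 0"
proof -
  have "col (W\<^sup>T * A * W) 0 = (W\<^sup>T * A) *\<^sub>v col W 0"
    using W A n0 by (subst col_mult2[of _ n n]) auto
  also have "\<dots> = W\<^sup>T *\<^sub>v (A *\<^sub>v col W 0)"
    using W A by (intro assoc_mult_mat_vec[of _ n n _ n]) auto
  also have "\<dots> = e \<cdot>\<^sub>v (W\<^sup>T *\<^sub>v col W 0)"
    unfolding ev using W by (intro mult_mat_vec[of _ n n]) auto
  also have "W\<^sup>T *\<^sub>v col W 0 = col (W\<^sup>T * W) 0"
    using W n0 by (subst col_mult2[of _ n n]) auto
  finally show ?thesis using WtW n0 by simp
qed

lemma orthogonal_deflation:
  fixes A W :: "real mat"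
  assumes A: "A \<in> carrier_mat (Suc m) (Suc m)" and sym: "A\<^sup>T = A"
    and W: "W \<in> carrier_mat (Suc m) (Suc m)" and WtW: "W\<^sup>T * W = 1\<^sub>m (Suc m)"
    and ev: "A *\<^sub>v col W 0 = e \<cdot>\<^sub>v col W 0"
  obtains A3 where "A3 \<in> carrier_mat m m" and "A3\<^sup>T = A3"
    and "W\<^sup>T * A * W = four_block_mat (mat 1 1 (\<lambda>_. e)) (0\<^sub>m 1 m) (0\<^sub>m m 1) A3"
proof -
  define A' where "A' = W\<^sup>T * A * W"
  have A': "A' \<in> carrier_mat (Suc m) (Suc m)" unfolding A'_def using W A by simp
  have symA': "A'\<^sup>T = A'" unfolding A'_def by (rule sym_congruence[OF W A sym])
  have col0: "col A' 0 = e \<cdot>\<^sub>v unit_vec (Suc m) 0"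
    unfolding A'_def by (rule col_congruence_eigenvector[OF A W WtW _ ev]) simp
  have first_col: "A' $$ (i, 0) = (if i = 0 then e else 0)" if "i < Suc m" for i
    using arg_cong[OF col0, of "\<lambda>v. v $ i"] that A' by (auto simp: unit_vec_def)
  have sym_entry: "A' $$ (j, i) = A' $$ (i, j)" if "i < Suc m" "j < Suc m" for i j
    using symA' that A' by (metis carrier_matD index_transpose_mat(1))
  have first_row: "A' $$ (0, j) = (if j = 0 then e else 0)" if "j < Suc m" for j
    using first_col[OF that] sym_entry[OF that] by simp
  define A3 where "A3 = mat m m (\<lambda>(i, j). A' $$ (Suc i, Suc j))"
  show thesis
  proof
    show A3: "A3 \<in> carrier_mat m m" unfolding A3_def by simp
    show "A3\<^sup>T = A3"
      using A3 sym_entry by (intro eq_matI) (auto simp: A3_def)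
    show "W\<^sup>T * A * W = four_block_mat (mat 1 1 (\<lambda>_. e)) (0\<^sub>m 1 m) (0\<^sub>m m 1) A3"
      unfolding A'_def[symmetric]
    proof (rule eq_matI)
      fix i j assume "i < dim_row (four_block_mat (mat 1 1 (\<lambda>_. e)) (0\<^sub>m 1 m) (0\<^sub>m m 1) A3)"
        and "j < dim_col (four_block_mat (mat 1 1 (\<lambda>_. e)) (0\<^sub>m 1 m) (0\<^sub>m m 1) A3)"
      then have ij: "i < Suc m" "j < Suc m" using A3 by auto
      show "A' $$ (i, j) = four_block_mat (mat 1 1 (\<lambda>_. e)) (0\<^sub>m 1 m) (0\<^sub>m m 1) A3 $$ (i, j)"
      proof (cases "i = 0 \<or> j = 0")
        case True
        then show ?thesis using first_col first_row ij A3 by auto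
      next
        case False
        then obtain i' j' where "i = Suc i'" "j = Suc j'" by (metis not0_implies_Suc)
        then show ?thesis using ij A3 by (auto simp: A3_def)
      qed
    qed (use A' A3 in auto)
  qed
qed

lemma orthogonal_one_block:
  fixes Q :: "'a :: comm_ring_1 mat"
  assumes Q: "Q \<in> carrier_mat m m" and QtQ: "Q\<^sup>T * Q = 1\<^sub>m m"
  defines "F \<equiv> four_block_mat (1\<^sub>m 1) (0\<^sub>m 1 m) (0\<^sub>m m 1) Q"
  shows "F\<^sup>T * F = 1\<^sub>m (Suc m)"
proof -
  have Ft: "F\<^sup>T = four_block_mat (1\<^sub>m 1) (0\<^sub>m 1 m) (0\<^sub>m m 1) Q\<^sup>T"
    unfolding F_def using Q by (subst transpose_four_block_mat) auto
  show ?thesis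
    unfolding Ft unfolding F_def using Q QtQ
    by (subst mult_four_block_mat) (auto simp: four_block_one_mat[of 1 m, simplified])
qed

lemma congruence_one_block:
  fixes Q L a :: "'a :: comm_ring_1 mat"
  assumes Q: "Q \<in> carrier_mat m m" and L: "L \<in> carrier_mat m m" and a: "a \<in> carrier_mat 1 1"
  defines "F \<equiv> four_block_mat (1\<^sub>m 1) (0\<^sub>m 1 m) (0\<^sub>m m 1) Q"
  shows "F * four_block_mat a (0\<^sub>m 1 m) (0\<^sub>m m 1) L * F\<^sup>T
           = four_block_mat a (0\<^sub>m 1 m) (0\<^sub>m m 1) (Q * L * Q\<^sup>T)"
proof -
  have Ft: "F\<^sup>T = four_block_mat (1\<^sub>m 1) (0\<^sub>m 1 m) (0\<^sub>m m 1) Q\<^sup>T"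
    unfolding F_def using Q by (subst transpose_four_block_mat) auto
  have FL: "F * four_block_mat a (0\<^sub>m 1 m) (0\<^sub>m m 1) L = four_block_mat a (0\<^sub>m 1 m) (0\<^sub>m m 1) (Q * L)"
    unfolding F_def using Q L a by (subst mult_four_block_mat) auto
  show ?thesis unfolding Ft FL using Q L a by (subst mult_four_block_mat) auto
qed

lemma diagonal_mat_four_block_mat:
  assumes A: "A \<in> carrier_mat k k" and B: "B \<in> carrier_mat m m"
    and dA: "diagonal_mat A" and dB: "diagonal_mat B"
  shows "diagonal_mat (four_block_mat A (0\<^sub>m k m) (0\<^sub>m m k) B)"
  unfolding diagonal_mat_def
proof (intro allI impI)
  fix i j assume "i < dim_row (four_block_mat A (0\<^sub>m k m) (0\<^sub>m m k) B)"
    and "j < dim_col (four_block_mat A (0\<^sub>m k m) (0\<^sub>m m k) B)" and ij: "i \<noteq> j"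
  then have bounds: "i < k + m" "j < k + m" using A B by auto
  moreover have "A $$ (i, j) = 0" if "i < k" "j < k"
    using dA A that ij unfolding diagonal_mat_def by auto
  moreover have "B $$ (i - k, j - k) = 0" if "\<not> i < k" "\<not> j < k"
    using dB B that ij bounds unfolding diagonal_mat_def by auto
  ultimately show "four_block_mat A (0\<^sub>m k m) (0\<^sub>m m k) B $$ (i, j) = 0"
    using A B by (subst index_mat_four_block) auto
qed

lemma orthogonal_mat_mult:
  fixes W F :: "'a :: comm_ring_1 mat"
  assumes W: "W \<in> carrier_mat n n" and F: "F \<in> carrier_mat n n"
    and WtW: "W\<^sup>T * W = 1\<^sub>m n" and FtF: "F\<^sup>T * F = 1\<^sub>m n"
  shows "(W * F)\<^sup>T * (W * F) = 1\<^sub>m n"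
proof -
  have "(W * F)\<^sup>T * (W * F) = F\<^sup>T * (W\<^sup>T * W) * F"
    using W F by (simp add: transpose_mult assoc_mult_mat[of _ n n _ n _ n])
  then show ?thesis using WtW FtF F by simp
qed

lemma orthogonal_congruence_cancel:
  fixes W A :: "'a :: field mat"
  assumes W: "W \<in> carrier_mat n n" and A: "A \<in> carrier_mat n n" and WtW: "W\<^sup>T * W = 1\<^sub>m n"
  shows "W * (W\<^sup>T * A * W) * W\<^sup>T = A"
proof -
  have WWt: "W * W\<^sup>T = 1\<^sub>m n" using mat_mult_left_right_inverse[OF _ W WtW] W by simp
  have "W * (W\<^sup>T * A * W) * W\<^sup>T = (W * W\<^sup>T) * A * (W * W\<^sup>T)"
    using W A by (simp add: assoc_mult_mat[of _ n n _ n _ n])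
  then show ?thesis using WWt A by simp
qed

theorem real_sym_mat_spectral_decomposition:
  fixes A :: "real mat"
  assumes "A \<in> carrier_mat n n" and "A\<^sup>T = A"
  shows "\<exists>Q L. Q \<in> carrier_mat n n \<and> L \<in> carrier_mat n n \<and> Q\<^sup>T * Q = 1\<^sub>m n \<and>
           diagonal_mat L \<and> A = Q * L * Q\<^sup>T"
  using assms
proof (induction n arbitrary: A)
  case 0
  then show ?case
    by (intro exI[of _ "1\<^sub>m 0"] exI[of _ A]) (auto simp: diagonal_mat_def)
next
  case (Suc m)
  let ?n = "Suc m"
  have A: "A \<in> carrier_mat ?n ?n" and sym: "A\<^sup>T = A" using Suc.prems by auto
  obtain e where "eigenvalue A e"
    by (rule real_sym_mat_has_eigenvalue[OF A sym zero_less_Suc])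
  then obtain u where u: "u \<in> carrier_vec ?n" "u \<bullet> u = 1" and ev: "A *\<^sub>v u = e \<cdot>\<^sub>v u"
    by (rule unit_eigenvector_exists[OF A])
  obtain W where W: "W \<in> carrier_mat ?n ?n" and WtW: "W\<^sup>T * W = 1\<^sub>m ?n" and Wu: "col W 0 = u"
    by (rule orthonormal_basis_completion[OF u])
  let ?e = "mat 1 1 (\<lambda>_. e) :: real mat"
  obtain A3 where A3: "A3 \<in> carrier_mat m m" "A3\<^sup>T = A3"
    and WAW: "W\<^sup>T * A * W = four_block_mat ?e (0\<^sub>m 1 m) (0\<^sub>m m 1) A3"
    by (rule orthogonal_deflation[OF A sym W WtW]) (use ev Wu in simp)
  obtain Q3 L3 where Q3: "Q3 \<in> carrier_mat m m" and L3: "L3 \<in> carrier_mat m m"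
    and Q3tQ3: "Q3\<^sup>T * Q3 = 1\<^sub>m m" and dL3: "diagonal_mat L3" and A3eq: "A3 = Q3 * L3 * Q3\<^sup>T"
    using Suc.IH[OF A3] by auto
  define F where "F = four_block_mat (1\<^sub>m 1) (0\<^sub>m 1 m) (0\<^sub>m m 1) Q3"
  define L where "L = four_block_mat ?e (0\<^sub>m 1 m) (0\<^sub>m m 1) L3"
  define Q where "Q = W * F"
  have F: "F \<in> carrier_mat ?n ?n" and L: "L \<in> carrier_mat ?n ?n"
    unfolding F_def L_def using Q3 L3 by auto
  have QtQ: "Q\<^sup>T * Q = 1\<^sub>m ?n"
    unfolding Q_def by (rule orthogonal_mat_mult[OF W F WtW orthogonal_one_block[OF Q3 Q3tQ3, folded F_def]])
  have "Q * L * Q\<^sup>T = W * (F * L * F\<^sup>T) * W\<^sup>T" unfolding Q_def using W F L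
    by (simp add: transpose_mult assoc_mult_mat[of _ ?n ?n _ ?n _ ?n])
  also have "F * L * F\<^sup>T = W\<^sup>T * A * W"
    unfolding WAW A3eq F_def L_def using congruence_one_block[OF Q3 L3] by simp
  finally have "A = Q * L * Q\<^sup>T" using orthogonal_congruence_cancel[OF W A WtW] by simp
  moreover have "diagonal_mat L"
    unfolding L_def using L3 dL3 by (intro diagonal_mat_four_block_mat) (auto simp: diagonal_mat_def)
  moreover have "Q \<in> carrier_mat ?n ?n" unfolding Q_def using W F by simp
  ultimately show ?case using L QtQ by blast
qed

section \<open>The smallest eigenvalue as minimum of the Rayleigh quotient\<close>

lemma bilinear_form_congruence:
  fixes X Y M :: "'a :: comm_ring_1 mat"
  assumes X: "X \<in> carrier_mat n k" and Y: "Y \<in> carrier_mat n k'" and M: "M \<in> carrier_mat n n"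
    and a: "a \<in> carrier_vec k" and c: "c \<in> carrier_vec k'"
  shows "(X *\<^sub>v a) \<bullet> (M *\<^sub>v (Y *\<^sub>v c)) = a \<bullet> ((X\<^sup>T * M * Y) *\<^sub>v c)"
proof -
  have "(X\<^sup>T * M * Y) *\<^sub>v c = X\<^sup>T *\<^sub>v (M *\<^sub>v (Y *\<^sub>v c))"
    using X Y M c by (simp add: assoc_mult_mat_vec[of _ k n _ k'] assoc_mult_mat_vec[of _ n n _ k'])
  then show ?thesis
    using transpose_vec_mult_scalar[of "X\<^sup>T" k n "M *\<^sub>v (Y *\<^sub>v c)" a] X Y M a c by simp
qed

lemma quadratic_form_diagonal_mat:
  fixes L :: "'a :: comm_ring_1 mat"
  assumes L: "L \<in> carrier_mat n n" and dL: "diagonal_mat L" and w: "w \<in> carrier_vec n"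
  shows "w \<bullet> (L *\<^sub>v w) = (\<Sum>i<n. L $$ (i, i) * (w $ i)\<^sup>2)"
proof -
  have Lw: "(L *\<^sub>v w) $ i = L $$ (i, i) * w $ i" if i: "i < n" for i
  proof -
    have "(L *\<^sub>v w) $ i = (\<Sum>j\<in>{0..<n}. L $$ (i, j) * w $ j)"
      using L w i by (simp add: scalar_prod_def row_def)
    also have "\<dots> = (\<Sum>j\<in>{0..<n}. if j = i then L $$ (i, i) * w $ i else 0)"
      using dL L i unfolding diagonal_mat_def by (intro sum.cong) auto
    finally show ?thesis using i by simp
  qed
  show ?thesis unfolding scalar_prod_def lessThan_atLeast0 using L
    by (intro sum.cong) (auto simp del: index_mult_mat_vec simp add: Lw power2_eq_square)
qed

lemma proots_prod_linear_factors: "proots (\<Prod>a\<leftarrow>es. [:- a, 1:]) = mset (es :: 'a :: idom list)"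
proof (induction es)
  case (Cons a es)
  have "(\<Prod>a\<leftarrow>es. [:- a, 1:]) \<noteq> 0" by (auto simp: prod_list_zero_iff)
  then show ?case using Cons by (simp add: proots_mult del: mult_pCons_left)
qed simp

lemma eigs_desc_orthogonal_diagonalization:
  fixes A Q L :: "real mat"
  assumes A: "A \<in> carrier_mat n n" and Q: "Q \<in> carrier_mat n n" and L: "L \<in> carrier_mat n n"
    and QtQ: "Q\<^sup>T * Q = 1\<^sub>m n" and dL: "diagonal_mat L" and AQ: "A = Q * L * Q\<^sup>T"
  shows "eigs_desc A = rev (sort (diag_mat L))"
proof -
  have QQt: "Q * Q\<^sup>T = 1\<^sub>m n" using mat_mult_left_right_inverse[OF _ Q QtQ] Q by simp
  have "similar_mat_wit A L Q Q\<^sup>T"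
    unfolding similar_mat_wit_def Let_def using A L Q QtQ QQt AQ by auto
  then have "char_poly A = char_poly L" by (intro char_poly_similar) (auto simp: similar_mat_def)
  also have "\<dots> = (\<Prod>a\<leftarrow>diag_mat L. [:- a, 1:])"
    by (rule char_poly_upper_triangular[OF L])
      (use dL L in \<open>auto simp: diagonal_mat_def upper_triangular_def\<close>)
  finally show ?thesis
    unfolding eigs_desc_def by (simp add: proots_prod_linear_factors sorted_list_of_multiset_mset)
qed

lemma sigma_last_orthogonal_diagonalization:
  fixes A Q L :: "real mat"
  assumes A: "A \<in> carrier_mat n n" and Q: "Q \<in> carrier_mat n n" and L: "L \<in> carrier_mat n n"
    and QtQ: "Q\<^sup>T * Q = 1\<^sub>m n" and dL: "diagonal_mat L" and AQ: "A = Q * L * Q\<^sup>T"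
    and n0: "0 < n"
  shows "sigma A n = (MIN i\<in>{..<n}. L $$ (i, i))"
proof -
  define es where "es = diag_mat L"
  have les: "length es = n" and set_es: "set es = (\<lambda>i. L $$ (i, i)) ` {..<n}"
    unfolding es_def diag_mat_def using L by auto
  have "sigma A n = sort es ! 0"
    unfolding sigma_def eigs_desc_orthogonal_diagonalization[OF A Q L QtQ dL AQ] es_def[symmetric]
    using les n0 by (simp add: rev_nth)
  also have "\<dots> = Min (set es)"
  proof (rule Min_eqI[symmetric])
    show "sort es ! 0 \<in> set es" using les n0 by (metis length_sort nth_mem set_sort)
  next
    fix y assume "y \<in> set es"
    then obtain j where "j < n" "sort es ! j = y" using les by (metis in_set_conv_nth length_sort set_sort)
    then show "sort es ! 0 \<le> y" using les sorted_nth_mono[of "sort es" 0 j] by simp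
  qed simp
  finally show ?thesis unfolding set_es .
qed

lemma real_sym_mat_eigenbasis:
  fixes A :: "real mat"
  assumes A: "A \<in> carrier_mat n n" and sym: "A\<^sup>T = A" and n0: "0 < n"
  obtains Q L where "Q \<in> carrier_mat n n" and "Q\<^sup>T * Q = 1\<^sub>m n"
    and "L \<in> carrier_mat n n" and "diagonal_mat L"
    and "sigma A n = (MIN i\<in>{..<n}. L $$ (i, i))"
    and "\<And>v. v \<in> carrier_vec n \<Longrightarrow> v \<bullet> v = (Q\<^sup>T *\<^sub>v v) \<bullet> (Q\<^sup>T *\<^sub>v v)"
    and "\<And>v. v \<in> carrier_vec n \<Longrightarrow> v \<bullet> (A *\<^sub>v v) = (Q\<^sup>T *\<^sub>v v) \<bullet> (L *\<^sub>v (Q\<^sup>T *\<^sub>v v))"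
proof -
  obtain Q L where Q: "Q \<in> carrier_mat n n" and L: "L \<in> carrier_mat n n"
    and QtQ: "Q\<^sup>T * Q = 1\<^sub>m n" and dL: "diagonal_mat L" and AQ: "A = Q * L * Q\<^sup>T"
    using real_sym_mat_spectral_decomposition[OF A sym] by auto
  have QQt: "Q * Q\<^sup>T = 1\<^sub>m n" using mat_mult_left_right_inverse[OF _ Q QtQ] Q by simp
  show thesis
  proof (rule that[OF Q QtQ L dL sigma_last_orthogonal_diagonalization[OF A Q L QtQ dL AQ n0]])
    fix v :: "real vec" assume v: "v \<in> carrier_vec n"
    show "v \<bullet> v = (Q\<^sup>T *\<^sub>v v) \<bullet> (Q\<^sup>T *\<^sub>v v)"
      using bilinear_form_congruence[of "Q\<^sup>T" n n "Q\<^sup>T" n "1\<^sub>m n" v v] Q v QQt by simp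
    show "v \<bullet> (A *\<^sub>v v) = (Q\<^sup>T *\<^sub>v v) \<bullet> (L *\<^sub>v (Q\<^sup>T *\<^sub>v v))"
      using bilinear_form_congruence[of "Q\<^sup>T" n n "Q\<^sup>T" n L v v] Q L v AQ by simp
  qed
qed

theorem sigma_last_le_quadratic_form:
  fixes A :: "real mat"
  assumes A: "A \<in> carrier_mat n n" and sym: "A\<^sup>T = A" and n0: "0 < n"
    and v: "v \<in> carrier_vec n"
  shows "sigma A n * (v \<bullet> v) \<le> v \<bullet> (A *\<^sub>v v)"
proof -
  obtain Q L where Q: "Q \<in> carrier_mat n n" and "Q\<^sup>T * Q = 1\<^sub>m n"
    and L: "L \<in> carrier_mat n n" and dL: "diagonal_mat L"
    and sig: "sigma A n = (MIN i\<in>{..<n}. L $$ (i, i))"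
    and norm: "\<And>v. v \<in> carrier_vec n \<Longrightarrow> v \<bullet> v = (Q\<^sup>T *\<^sub>v v) \<bullet> (Q\<^sup>T *\<^sub>v v)"
    and form: "\<And>v. v \<in> carrier_vec n \<Longrightarrow> v \<bullet> (A *\<^sub>v v) = (Q\<^sup>T *\<^sub>v v) \<bullet> (L *\<^sub>v (Q\<^sup>T *\<^sub>v v))"
    using real_sym_mat_eigenbasis[OF A sym n0] by blast
  define w where "w = Q\<^sup>T *\<^sub>v v"
  have w: "w \<in> carrier_vec n" unfolding w_def using Q v by simp
  have "sigma A n * (v \<bullet> v) = (\<Sum>i<n. sigma A n * (w $ i)\<^sup>2)"
    unfolding norm[OF v] w_def[symmetric] scalar_prod_self_eq_sum_squares[OF w] by (simp add: sum_distrib_left)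
  also have "\<dots> \<le> (\<Sum>i<n. L $$ (i, i) * (w $ i)\<^sup>2)"
    unfolding sig by (intro sum_mono mult_right_mono) auto
  also have "\<dots> = v \<bullet> (A *\<^sub>v v)"
    unfolding form[OF v] w_def[symmetric] by (rule quadratic_form_diagonal_mat[OF L dL w, symmetric])
  finally show ?thesis .
qed

lemma sigma_last_attained:
  fixes A :: "real mat"
  assumes A: "A \<in> carrier_mat n n" and sym: "A\<^sup>T = A" and n0: "0 < n"
  obtains q where "q \<in> carrier_vec n" and "q \<bullet> q = 1" and "q \<bullet> (A *\<^sub>v q) = sigma A n"
proof -
  obtain Q L where Q: "Q \<in> carrier_mat n n" and QtQ: "Q\<^sup>T * Q = 1\<^sub>m n"
    and L: "L \<in> carrier_mat n n" and dL: "diagonal_mat L"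
    and sig: "sigma A n = (MIN i\<in>{..<n}. L $$ (i, i))"
    and norm: "\<And>v. v \<in> carrier_vec n \<Longrightarrow> v \<bullet> v = (Q\<^sup>T *\<^sub>v v) \<bullet> (Q\<^sup>T *\<^sub>v v)"
    and form: "\<And>v. v \<in> carrier_vec n \<Longrightarrow> v \<bullet> (A *\<^sub>v v) = (Q\<^sup>T *\<^sub>v v) \<bullet> (L *\<^sub>v (Q\<^sup>T *\<^sub>v v))"
    using real_sym_mat_eigenbasis[OF A sym n0] by blast
  have "sigma A n \<in> (\<lambda>i. L $$ (i, i)) ` {..<n}" unfolding sig using n0 by (intro Min_in) auto
  then obtain k where k: "k < n" and sigk: "sigma A n = L $$ (k, k)" by auto
  define q where "q = Q *\<^sub>v unit_vec n k"
  have q: "q \<in> carrier_vec n" unfolding q_def using Q by simp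
  have "Q\<^sup>T *\<^sub>v q = (Q\<^sup>T * Q) *\<^sub>v unit_vec n k"
    unfolding q_def using Q by (intro assoc_mult_mat_vec[symmetric]) auto
  then have Qtq: "Q\<^sup>T *\<^sub>v q = unit_vec n k" using QtQ by simp
  show thesis
  proof (rule that[OF q])
    show "q \<bullet> q = 1" using norm[OF q] Qtq k by simp
    have "q \<bullet> (A *\<^sub>v q) = (\<Sum>i<n. L $$ (i, i) * (unit_vec n k $ i)\<^sup>2)"
      using form[OF q] quadratic_form_diagonal_mat[OF L dL, of "unit_vec n k"] Qtq by simp
    also have "\<dots> = (\<Sum>i<n. if i = k then L $$ (k, k) else 0)"
      by (intro sum.cong) (auto simp: unit_vec_def)
    also have "\<dots> = L $$ (k, k)" using k by simp
    finally show "q \<bullet> (A *\<^sub>v q) = sigma A n" using sigk by simp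
  qed
qed

lemma psd_congruence_sigma_last_nonneg:
  fixes M X :: "real mat"
  assumes psd: "psd M D" and X: "X \<in> carrier_mat D k" and k0: "0 < k"
  shows "0 \<le> sigma (X\<^sup>T * M * X) k"
proof -
  have M: "M \<in> carrier_mat D D" and sym: "M\<^sup>T = M" using psd unfolding psd_def by auto
  have C: "X\<^sup>T * M * X \<in> carrier_mat k k" using X M by simp
  obtain w where w: "w \<in> carrier_vec k" and form: "w \<bullet> ((X\<^sup>T * M * X) *\<^sub>v w) = sigma (X\<^sup>T * M * X) k"
    using sigma_last_attained[OF C sym_congruence[OF X M sym] k0] by blast
  have "0 \<le> (X *\<^sub>v w) \<bullet> (M *\<^sub>v (X *\<^sub>v w))" using psd X w unfolding psd_def by simp
  also have "\<dots> = sigma (X\<^sup>T * M * X) k"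
    unfolding form[symmetric] by (rule bilinear_form_congruence[OF X X M w w])
  finally show ?thesis .
qed

lemma spec_norm_bdd_above:
  fixes B :: "real mat"
  assumes B: "B \<in> carrier_mat k l"
  shows "bdd_above {vnorm (B *\<^sub>v v) | v. v \<in> carrier_vec (dim_col B) \<and> vnorm v = 1}"
proof (rule bdd_aboveI)
  fix x assume "x \<in> {vnorm (B *\<^sub>v v) | v. v \<in> carrier_vec (dim_col B) \<and> vnorm v = 1}"
  then obtain v where v: "v \<in> carrier_vec l" "vnorm v = 1" and x: "x = vnorm (B *\<^sub>v v)"
    using B by auto
  have "(B *\<^sub>v v) \<bullet> (B *\<^sub>v v) = (\<Sum>i<k. ((B *\<^sub>v v) $ i)\<^sup>2)"
    using B v by (intro scalar_prod_self_eq_sum_squares) simp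
  also have "\<dots> \<le> (\<Sum>i<k. (vnorm (row B i))\<^sup>2)"
  proof (rule sum_mono)
    fix i assume "i \<in> {..<k}"
    then have "\<bar>(B *\<^sub>v v) $ i\<bar> \<le> vnorm (row B i)"
      using abs_scalar_prod_le_vnorm[of "row B i" l v] B v by simp
    then show "((B *\<^sub>v v) $ i)\<^sup>2 \<le> (vnorm (row B i))\<^sup>2"
      by (metis abs_ge_zero power2_abs power_mono)
  qed
  finally show "x \<le> sqrt (\<Sum>i<k. (vnorm (row B i))\<^sup>2)"
    unfolding x vnorm_def by (rule real_sqrt_le_mono)
qed

lemma vnorm_mult_le_spec_norm:
  fixes B :: "real mat"
  assumes B: "B \<in> carrier_mat k l" and b: "b \<in> carrier_vec l"
  shows "vnorm (B *\<^sub>v b) \<le> spec_norm B * vnorm b"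
proof (cases "b = 0\<^sub>v l")
  case True
  have "B *\<^sub>v b = 0\<^sub>v k" unfolding True using B by (intro eq_vecI) auto
  then show ?thesis unfolding vnorm_def using True by simp
next
  case False
  define c where "c = vnorm b"
  have c0: "0 < c" using scalar_prod_self_pos[OF b False] unfolding c_def vnorm_def by simp
  define v where "v = (1 / c) \<cdot>\<^sub>v b"
  have v: "v \<in> carrier_vec l" and v1: "vnorm v = 1"
    unfolding v_def using b c0 by (auto simp: vnorm_smult c_def)
  have "vnorm (B *\<^sub>v v) \<le> spec_norm B"
    unfolding spec_norm_def using B v v1
    by (intro cSup_upper[OF _ spec_norm_bdd_above[OF B]]) auto
  moreover have "vnorm (B *\<^sub>v v) = vnorm (B *\<^sub>v b) / c"
    unfolding v_def using B b c0 by (simp add: mult_mat_vec vnorm_smult)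
  ultimately show ?thesis using c0 by (simp add: c_def field_simps)
qed

lemma spec_norm_nonneg:
  fixes B :: "real mat"
  assumes B: "B \<in> carrier_mat k l" and l0: "0 < l"
  shows "0 \<le> spec_norm B"
proof -
  have "vnorm (B *\<^sub>v unit_vec l 0) \<le> spec_norm B * vnorm (unit_vec l 0)"
    by (rule vnorm_mult_le_spec_norm[OF B]) simp
  moreover have "vnorm (unit_vec l 0) = 1" using l0 by (simp add: vnorm_def)
  ultimately show ?thesis using vnorm_nonneg[of "B *\<^sub>v unit_vec l 0"] by simp
qed

section \<open>The two-by-two estimate\<close>

lemma min_eigenvalue_2x2_le_quadratic_form:
  fixes s t x y z :: real
  assumes s: "0 \<le> s" and t: "0 \<le> t" and st: "s\<^sup>2 + t\<^sup>2 = 1" and z: "0 \<le> z"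
  shows "((x + y) - sqrt ((x - y)\<^sup>2 + 4 * z\<^sup>2)) / 2 \<le> y * s\<^sup>2 + x * t\<^sup>2 - 2 * z * s * t"
proof -
  define r where "r = sqrt ((x - y)\<^sup>2 + 4 * z\<^sup>2)"
  have r2: "r\<^sup>2 = (x - y)\<^sup>2 + 4 * z\<^sup>2" unfolding r_def by simp
  have rxy: "\<bar>x - y\<bar> \<le> r" unfolding r_def by (rule real_le_rsqrt) simp
  define \<alpha> where "\<alpha> = (r + y - x) / 2"
  define \<beta> where "\<beta> = (r - y + x) / 2"
  have \<alpha>: "0 \<le> \<alpha>" and \<beta>: "0 \<le> \<beta>" unfolding \<alpha>_def \<beta>_def using rxy by auto
  have "\<alpha> * \<beta> = z\<^sup>2" unfolding \<alpha>_def \<beta>_def using r2 by (simp add: power2_eq_square field_simps)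
  then have sq: "sqrt (\<alpha> * \<beta>) = z" using z by simp
  have "0 \<le> (sqrt \<alpha> * s - sqrt \<beta> * t)\<^sup>2" by simp
  also have "\<dots> = \<alpha> * s\<^sup>2 + \<beta> * t\<^sup>2 - 2 * sqrt (\<alpha> * \<beta>) * s * t"
    using \<alpha> \<beta> by (simp add: power2_diff power_mult_distrib real_sqrt_mult)
  finally have amgm: "2 * z * s * t \<le> \<alpha> * s\<^sup>2 + \<beta> * t\<^sup>2" unfolding sq by simp
  have "((x + y) - r) / 2 = ((x + y) - r) / 2 * (s\<^sup>2 + t\<^sup>2)" using st by simp
  also have "\<dots> = y * s\<^sup>2 + x * t\<^sup>2 - (\<alpha> * s\<^sup>2 + \<beta> * t\<^sup>2)"
    unfolding \<alpha>_def \<beta>_def by (simp add: field_simps)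
  finally show ?thesis using amgm unfolding r_def by linarith
qed

lemma min_eigenvalue_2x2_ge_third:
  fixes x y z :: real
  assumes x: "0 \<le> x" and y: "0 \<le> y" and z: "0 \<le> z" and zxy: "z \<le> sqrt (x * y) / 2"
  shows "min x y / 3 \<le> ((x + y) - sqrt ((x - y)\<^sup>2 + 4 * z\<^sup>2)) / 2"
proof -
  have "(2 * z)\<^sup>2 \<le> (sqrt (x * y))\<^sup>2" using zxy z by (intro power_mono) auto
  then have z2: "4 * z\<^sup>2 \<le> x * y" using x y by (simp add: power_mult_distrib)
  define m where "m = min x y"
  have m: "0 \<le> m" "m \<le> x" "m \<le> y" unfolding m_def using x y by auto
  have "(x - y)\<^sup>2 + x * y \<le> (x + y - 2 * m / 3)\<^sup>2"
  proof (cases "x \<le> y")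
    case True
    then have "(x + y - 2 * m / 3)\<^sup>2 - ((x - y)\<^sup>2 + x * y) = x * (15 * y - 8 * x) / 9"
      unfolding m_def by (simp add: power2_eq_square algebra_simps)
    moreover have "0 \<le> x * (15 * y - 8 * x)" using x True by (intro mult_nonneg_nonneg) auto
    ultimately show ?thesis by linarith
  next
    case False
    then have "(x + y - 2 * m / 3)\<^sup>2 - ((x - y)\<^sup>2 + x * y) = y * (15 * x - 8 * y) / 9"
      unfolding m_def by (simp add: power2_eq_square algebra_simps)
    moreover have "0 \<le> y * (15 * x - 8 * y)" using y False by (intro mult_nonneg_nonneg) auto
    ultimately show ?thesis by linarith
  qed
  then have "sqrt ((x - y)\<^sup>2 + 4 * z\<^sup>2) \<le> x + y - 2 * m / 3"
    using z2 m by (intro real_le_lsqrt) auto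
  then show ?thesis unfolding m_def by (simp add: field_simps)
qed

section \<open>Splitting along a subspace and its orthogonal complement\<close>

lemma complementary_isometries_resolve_identity:
  fixes U V :: "'a :: field mat"
  assumes U: "U \<in> carrier_mat D d" and V: "V \<in> carrier_mat D e" and De: "D = d + e"
    and UU: "U\<^sup>T * U = 1\<^sub>m d" and VV: "V\<^sup>T * V = 1\<^sub>m e" and UV: "U\<^sup>T * V = 0\<^sub>m d e"
  shows "U * U\<^sup>T + V * V\<^sup>T = 1\<^sub>m D"
proof -
  \<comment> \<open>with empty lower blocks, \<open>W\<close> is the square matrix with columns \<open>[U V]\<close>\<close>
  define W where "W = four_block_mat U V (0\<^sub>m 0 d) (0\<^sub>m 0 e)"
  have W: "W \<in> carrier_mat D D" unfolding W_def using U V De by auto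
  have Wt: "W\<^sup>T = four_block_mat U\<^sup>T (0\<^sub>m d 0) V\<^sup>T (0\<^sub>m e 0)"
    unfolding W_def using U V by (subst transpose_four_block_mat) auto
  have "V\<^sup>T * U = (U\<^sup>T * V)\<^sup>T" using U V by (simp add: transpose_mult)
  then have VU: "V\<^sup>T * U = 0\<^sub>m e d" unfolding UV by simp
  have "W\<^sup>T * W = four_block_mat (1\<^sub>m d) (0\<^sub>m d e) (0\<^sub>m e d) (1\<^sub>m e)"
    unfolding Wt unfolding W_def using U V UU VV UV VU by (subst mult_four_block_mat) auto
  then have "W\<^sup>T * W = 1\<^sub>m D" unfolding four_block_one_mat De .
  then have WWt: "W * W\<^sup>T = 1\<^sub>m D" using mat_mult_left_right_inverse[OF _ W] W by simp
  have blocks: "W * W\<^sup>T = four_block_mat (U * U\<^sup>T + V * V\<^sup>T) (U * 0\<^sub>m d 0 + V * 0\<^sub>m e 0)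
      (0\<^sub>m 0 d * U\<^sup>T + 0\<^sub>m 0 e * V\<^sup>T) (0\<^sub>m 0 d * 0\<^sub>m d 0 + 0\<^sub>m 0 e * 0\<^sub>m e 0)"
    unfolding Wt unfolding W_def using U V by (subst mult_four_block_mat) auto
  show ?thesis
  proof (rule eq_matI)
    fix i j assume "i < dim_row (1\<^sub>m D)" and "j < dim_col (1\<^sub>m D)"
    then have "(U * U\<^sup>T + V * V\<^sup>T) $$ (i, j) = (W * W\<^sup>T) $$ (i, j)"
      unfolding blocks using U V by (subst index_mat_four_block) auto
    then show "(U * U\<^sup>T + V * V\<^sup>T) $$ (i, j) = 1\<^sub>m D $$ (i, j)" unfolding WWt .
  qed (use U V in auto)
qed

lemma vec_decomposition:
  fixes U V :: "'a :: comm_ring_1 mat"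
  assumes U: "U \<in> carrier_mat D d" and V: "V \<in> carrier_mat D e"
    and res: "U * U\<^sup>T + V * V\<^sup>T = 1\<^sub>m D" and q: "q \<in> carrier_vec D"
  shows "U *\<^sub>v (U\<^sup>T *\<^sub>v q) + V *\<^sub>v (V\<^sup>T *\<^sub>v q) = q"
proof -
  have "U *\<^sub>v (U\<^sup>T *\<^sub>v q) + V *\<^sub>v (V\<^sup>T *\<^sub>v q) = (U * U\<^sup>T) *\<^sub>v q + (V * V\<^sup>T) *\<^sub>v q"
    using U V q by (simp add: assoc_mult_mat_vec[of _ D d _ D] assoc_mult_mat_vec[of _ D e _ D])
  also have "\<dots> = (U * U\<^sup>T + V * V\<^sup>T) *\<^sub>v q"
    using U V q by (intro add_mult_distrib_mat_vec[symmetric]) auto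
  finally show ?thesis unfolding res using q by simp
qed

lemma scalar_prod_decomposition:
  fixes U V :: "'a :: comm_ring_1 mat"
  assumes U: "U \<in> carrier_mat D d" and V: "V \<in> carrier_mat D e"
    and res: "U * U\<^sup>T + V * V\<^sup>T = 1\<^sub>m D" and q: "q \<in> carrier_vec D"
  defines "a \<equiv> U\<^sup>T *\<^sub>v q" and "b \<equiv> V\<^sup>T *\<^sub>v q"
  shows "q \<bullet> q = a \<bullet> a + b \<bullet> b"
proof -
  have "q \<bullet> q = q \<bullet> (U *\<^sub>v a + V *\<^sub>v b)"
    unfolding a_def b_def vec_decomposition[OF U V res q] ..
  also have "\<dots> = q \<bullet> (U *\<^sub>v a) + q \<bullet> (V *\<^sub>v b)"
    using U V q by (intro scalar_prod_add_distrib[of _ D]) (auto simp: a_def b_def)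
  also have "q \<bullet> (U *\<^sub>v a) = a \<bullet> a"
    using transpose_vec_mult_scalar[of U D d a q] U q unfolding a_def by simp
  also have "q \<bullet> (V *\<^sub>v b) = b \<bullet> b"
    using transpose_vec_mult_scalar[of V D e b q] V q unfolding b_def by simp
  finally show ?thesis .
qed

lemma quadratic_form_decomposition:
  fixes M U V :: "'a :: comm_ring_1 mat"
  assumes M: "M \<in> carrier_mat D D" and sym: "M\<^sup>T = M"
    and U: "U \<in> carrier_mat D d" and V: "V \<in> carrier_mat D e"
    and res: "U * U\<^sup>T + V * V\<^sup>T = 1\<^sub>m D" and q: "q \<in> carrier_vec D"
  defines "a \<equiv> U\<^sup>T *\<^sub>v q" and "b \<equiv> V\<^sup>T *\<^sub>v q"
  shows "q \<bullet> (M *\<^sub>v q) = a \<bullet> ((U\<^sup>T * M * U) *\<^sub>v a) + 2 * (a \<bullet> ((U\<^sup>T * M * V) *\<^sub>v b))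
           + b \<bullet> ((V\<^sup>T * M * V) *\<^sub>v b)"
proof -
  have a: "a \<in> carrier_vec d" and b: "b \<in> carrier_vec e" unfolding a_def b_def using U V q by auto
  have Ua: "U *\<^sub>v a \<in> carrier_vec D" and Vb: "V *\<^sub>v b \<in> carrier_vec D" using U V a b by auto
  have MUa: "M *\<^sub>v (U *\<^sub>v a) \<in> carrier_vec D" and MVb: "M *\<^sub>v (V *\<^sub>v b) \<in> carrier_vec D"
    using M Ua Vb by auto
  have qs: "U *\<^sub>v a + V *\<^sub>v b = q"
    unfolding a_def b_def by (rule vec_decomposition[OF U V res q])
  have "q \<bullet> (M *\<^sub>v q) = (U *\<^sub>v a + V *\<^sub>v b) \<bullet> (M *\<^sub>v (U *\<^sub>v a + V *\<^sub>v b))"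
    unfolding qs ..
  also have "M *\<^sub>v (U *\<^sub>v a + V *\<^sub>v b) = M *\<^sub>v (U *\<^sub>v a) + M *\<^sub>v (V *\<^sub>v b)"
    using M Ua Vb by (rule mult_add_distrib_mat_vec)
  also have "(U *\<^sub>v a + V *\<^sub>v b) \<bullet> (M *\<^sub>v (U *\<^sub>v a) + M *\<^sub>v (V *\<^sub>v b))
      = (U *\<^sub>v a) \<bullet> (M *\<^sub>v (U *\<^sub>v a)) + (U *\<^sub>v a) \<bullet> (M *\<^sub>v (V *\<^sub>v b))
      + ((V *\<^sub>v b) \<bullet> (M *\<^sub>v (U *\<^sub>v a)) + (V *\<^sub>v b) \<bullet> (M *\<^sub>v (V *\<^sub>v b)))"
    using Ua Vb MUa MVb by (simp add: add_scalar_prod_distrib[of _ D] scalar_prod_add_distrib[of _ D])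
  also have "(V *\<^sub>v b) \<bullet> (M *\<^sub>v (U *\<^sub>v a)) = (U *\<^sub>v a) \<bullet> (M *\<^sub>v (V *\<^sub>v b))"
  proof -
    have "(V *\<^sub>v b) \<bullet> (M *\<^sub>v (U *\<^sub>v a)) = (M\<^sup>T *\<^sub>v (V *\<^sub>v b)) \<bullet> (U *\<^sub>v a)"
      using transpose_vec_mult_scalar[OF M Ua Vb] by simp
    then show ?thesis unfolding sym using MVb Ua by (simp add: comm_scalar_prod[of _ D])
  qed
  also have "(U *\<^sub>v a) \<bullet> (M *\<^sub>v (U *\<^sub>v a)) = a \<bullet> ((U\<^sup>T * M * U) *\<^sub>v a)"
    by (rule bilinear_form_congruence[OF U U M a a])
  also have "(U *\<^sub>v a) \<bullet> (M *\<^sub>v (V *\<^sub>v b)) = a \<bullet> ((U\<^sup>T * M * V) *\<^sub>v b)"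
    by (rule bilinear_form_congruence[OF U V M a b])
  also have "(V *\<^sub>v b) \<bullet> (M *\<^sub>v (V *\<^sub>v b)) = b \<bullet> ((V\<^sup>T * M * V) *\<^sub>v b)"
    by (rule bilinear_form_congruence[OF V V M b b])
  finally show ?thesis by (simp add: algebra_simps)
qed

lemma sigma_last_ge_block_quadratic_form:
  fixes M U V :: "real mat"
  assumes M: "M \<in> carrier_mat D D" and sym: "M\<^sup>T = M" and D0: "0 < D"
    and U: "U \<in> carrier_mat D d" and V: "V \<in> carrier_mat D e" and d0: "0 < d" and e0: "0 < e"
    and res: "U * U\<^sup>T + V * V\<^sup>T = 1\<^sub>m D"
  obtains s t where "0 \<le> s" and "0 \<le> t" and "s\<^sup>2 + t\<^sup>2 = 1"
    and "sigma (U\<^sup>T * M * U) d * s\<^sup>2 + sigma (V\<^sup>T * M * V) e * t\<^sup>2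
           - 2 * spec_norm (U\<^sup>T * M * V) * s * t \<le> sigma M D"
proof -
  let ?A = "U\<^sup>T * M * U" and ?B = "U\<^sup>T * M * V" and ?C = "V\<^sup>T * M * V"
  obtain q where q: "q \<in> carrier_vec D" and q1: "q \<bullet> q = 1" and qM: "q \<bullet> (M *\<^sub>v q) = sigma M D"
    using sigma_last_attained[OF M sym D0] by blast
  define a where "a = U\<^sup>T *\<^sub>v q"
  define b where "b = V\<^sup>T *\<^sub>v q"
  have a: "a \<in> carrier_vec d" and b: "b \<in> carrier_vec e" unfolding a_def b_def using U V q by auto
  have s2: "(vnorm a)\<^sup>2 = a \<bullet> a" and t2: "(vnorm b)\<^sup>2 = b \<bullet> b" by (rule vnorm_square)+
  have "sigma ?A d * (vnorm a)\<^sup>2 \<le> a \<bullet> (?A *\<^sub>v a)"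
    unfolding s2 using U M by (intro sigma_last_le_quadratic_form[OF _ sym_congruence[OF U M sym] d0 a]) simp
  moreover have "sigma ?C e * (vnorm b)\<^sup>2 \<le> b \<bullet> (?C *\<^sub>v b)"
    unfolding t2 using V M by (intro sigma_last_le_quadratic_form[OF _ sym_congruence[OF V M sym] e0 b]) simp
  moreover have "- (spec_norm ?B * vnorm a * vnorm b) \<le> a \<bullet> (?B *\<^sub>v b)"
  proof -
    have B: "?B \<in> carrier_mat d e" using U V M by simp
    then have Bb: "?B *\<^sub>v b \<in> carrier_vec d" using b by simp
    have "\<bar>a \<bullet> (?B *\<^sub>v b)\<bar> \<le> vnorm a * vnorm (?B *\<^sub>v b)" by (rule abs_scalar_prod_le_vnorm[OF a Bb])
    also have "\<dots> \<le> vnorm a * (spec_norm ?B * vnorm b)"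
      using B b by (intro mult_left_mono vnorm_mult_le_spec_norm vnorm_nonneg)
    finally show ?thesis by (simp add: algebra_simps)
  qed
  moreover have "sigma M D = a \<bullet> (?A *\<^sub>v a) + 2 * (a \<bullet> (?B *\<^sub>v b)) + b \<bullet> (?C *\<^sub>v b)"
    unfolding qM[symmetric] a_def b_def by (rule quadratic_form_decomposition[OF M sym U V res q])
  ultimately have "sigma ?A d * (vnorm a)\<^sup>2 + sigma ?C e * (vnorm b)\<^sup>2
      - 2 * spec_norm ?B * vnorm a * vnorm b \<le> sigma M D"
    by linarith
  moreover have "(vnorm a)\<^sup>2 + (vnorm b)\<^sup>2 = 1"
    unfolding s2 t2 using scalar_prod_decomposition[OF U V res q, folded a_def b_def] q1 by simp
  ultimately show thesis by (intro that[OF vnorm_nonneg vnorm_nonneg])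
qed

theorem lemma2:
  fixes M U V :: "real mat" and D d :: nat
  assumes "psd M D"
    and "1 \<le> d" and "d < D"
    and "U \<in> carrier_mat D d" and "V \<in> carrier_mat D (D - d)"
    and "U\<^sup>T * U = 1\<^sub>m d" and "V\<^sup>T * V = 1\<^sub>m (D - d)" and "U\<^sup>T * V = 0\<^sub>m d (D - d)"
  shows "sigma M D \<ge>
           ((sigma (V\<^sup>T * M * V) (D - d) + sigma (U\<^sup>T * M * U) d)
             - sqrt ((sigma (V\<^sup>T * M * V) (D - d) - sigma (U\<^sup>T * M * U) d)\<^sup>2
                     + 4 * (spec_norm (U\<^sup>T * M * V))\<^sup>2)) / 2
       \<and> (spec_norm (U\<^sup>T * M * V)
             \<le> sqrt (sigma (V\<^sup>T * M * V) (D - d) * sigma (U\<^sup>T * M * U) d) / 2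
          \<longrightarrow> sigma M D \<ge> min (sigma (V\<^sup>T * M * V) (D - d)) (sigma (U\<^sup>T * M * U) d) / 3)"
proof -
  let ?x = "sigma (V\<^sup>T * M * V) (D - d)" and ?y = "sigma (U\<^sup>T * M * U) d"
    and ?z = "spec_norm (U\<^sup>T * M * V)"
  have M: "M \<in> carrier_mat D D" and sym: "M\<^sup>T = M" using assms(1) unfolding psd_def by auto
  have res: "U * U\<^sup>T + V * V\<^sup>T = 1\<^sub>m D"
    using complementary_isometries_resolve_identity[OF assms(4,5) _ assms(6-8)] assms(3) by simp
  obtain s t where st: "0 \<le> s" "0 \<le> t" "s\<^sup>2 + t\<^sup>2 = 1"
    and low: "?y * s\<^sup>2 + ?x * t\<^sup>2 - 2 * ?z * s * t \<le> sigma M D"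
    using sigma_last_ge_block_quadratic_form[OF M sym _ assms(4,5) _ _ res] assms(2,3) by auto
  have z: "0 \<le> ?z" using assms(4,5) M assms(3) by (intro spec_norm_nonneg[of _ d "D - d"]) auto
  have x: "0 \<le> ?x" using psd_congruence_sigma_last_nonneg[OF assms(1,5)] assms(3) by simp
  have y: "0 \<le> ?y" using psd_congruence_sigma_last_nonneg[OF assms(1,4)] assms(2) by simp
  have "((?x + ?y) - sqrt ((?x - ?y)\<^sup>2 + 4 * ?z\<^sup>2)) / 2 \<le> sigma M D"
    using min_eigenvalue_2x2_le_quadratic_form[OF st z, of ?x ?y] low by linarith
  then show ?thesis using min_eigenvalue_2x2_ge_third[OF x y z] by auto
qed

end
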